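(* Let $f_1(z)=\dfrac{2(z^2-\frac34)^3}{z^2(z^2-\frac98)^2}-1$. For every $n\ge1$ and every point $v\in\widehat{\mathbb{C}}$ with $f_1^n(v)=\infty$, the local degree satisfies $\deg(f_1^n,v)=2$; equivalently, every $a$-flower of level $n\ge1$ has degree $2$.
   Context: $\operatorname{post}(f_1)=\{-1,1,\infty\}$. An $n$-vertex is a point of $f_1^{-n}(\{-1,1,\infty\})$; it is of type $a$ if $f_1^n(v)=\infty$. The flower $W^n(v)$ of an $n$-vertex $v$ is the union of the closures of the components of $\widehat{\mathbb{C}}\setminus f_1^{-n}(\widehat{\mathbb{R}})$ that contain $v$, and its degree is $\deg(f_1^n,v)$; an $a$-flower is a flower centered at an $n$-vertex of type $a$. *)

theory Defs
  imports "HOL-Complex_Analysis.Complex_Analysis"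
begin

text \<open>The Riemann sphere is modelled as complex option, None being the point at infinity.\<close>

type_synonym sphere = "complex option"

text \<open>Its poles in the plane are exactly the zeros of the denominator (the numerator does not
  vanish there), and its value at infinity is the limit 2 - 1 = 1.\<close>

definition f1 :: "sphere \<Rightarrow> sphere" where
  "f1 p = (case p of
      None \<Rightarrow> Some 1
    | Some z \<Rightarrow> (if z\<^sup>2 * (z\<^sup>2 - 9/8)\<^sup>2 = 0 then None
                 else Some (2 * (z\<^sup>2 - 3/4) ^ 3 / (z\<^sup>2 * (z\<^sup>2 - 9/8)\<^sup>2) - 1)))"

text \<open>Standard local coordinates of the sphere: around a finite point a the coordinate is
  z - a, around infinity it is 1/z.  (chart p q is the coordinate of q in the chart
  centred at p; the value chart (Some a) None is junk and irrelevant locally.)\<close>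

definition chart :: "sphere \<Rightarrow> sphere \<Rightarrow> complex" where
  "chart p q = (case p of
      Some a \<Rightarrow> (case q of Some z \<Rightarrow> z - a | None \<Rightarrow> 0)
    | None \<Rightarrow> (case q of Some z \<Rightarrow> 1 / z | None \<Rightarrow> 0))"

definition chart_inv :: "sphere \<Rightarrow> complex \<Rightarrow> sphere" where
  "chart_inv p w = (case p of
      Some a \<Rightarrow> Some (a + w)
    | None \<Rightarrow> (if w = 0 then None else Some (1 / w)))"

definition local_deg :: "(sphere \<Rightarrow> sphere) \<Rightarrow> sphere \<Rightarrow> int" where
  "local_deg g v = zorder (\<lambda>w. chart (g v) (g (chart_inv v w))) 0"

end

theory Submission
  imports Defs
begin

text \<open>The postcritical set {-1, 1, \<infinity>} is mapped onto the fixed point 1, and the critical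
  points of f1 are \<infinity> and the solutions of z^2 = 3/4 (mapped to -1) together with the poles
  0, \<plusminus>sqrt(9/8).  Hence if f1^n(v) = \<infinity>, the orbit v, ..., f1^(n-1)(v) meets no critical
  point before its last entry p = f1^(n-1)(v), which is a pole.  So f1^(n-1) is conformal
  near v, and every pole of f1 is double, which gives local degree 2.\<close>

definition f1_den :: "complex \<Rightarrow> complex" where
  "f1_den z = z\<^sup>2 * (z\<^sup>2 - 9/8)\<^sup>2"

definition f1_num :: "complex \<Rightarrow> complex" where
  "f1_num z = 2 * (z\<^sup>2 - 3/4) ^ 3 - f1_den z"

definition f1_plane :: "complex \<Rightarrow> complex" where
  "f1_plane z = 2 * (z\<^sup>2 - 3/4) ^ 3 / f1_den z - 1"

lemma f1_Some: "f1 (Some z) = (if f1_den z = 0 then None else Some (f1_plane z))"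
  by (simp add: f1_def f1_den_def f1_plane_def)

lemma f1_funpow_one: "(f1 ^^ k) (Some 1) = Some 1"
proof -
  have "f1 (Some 1) = Some 1" by (simp add: f1_def power_divide)
  then show ?thesis by (induction k) simp_all
qed

lemma f1_postcritical:
  assumes "x \<in> {None, Some 1, Some (-1)}"
  shows "(f1 ^^ Suc k) x = Some 1"
proof -
  have "f1 x = Some 1" using assms by (auto simp: f1_def power_divide)
  then show ?thesis by (simp only: funpow_Suc_right o_apply f1_funpow_one)
qed

lemma f1_funpow_None_avoids_postcritical:
  assumes "(f1 ^^ n) v = None" "j < n"
  shows "(f1 ^^ j) v \<notin> {None, Some 1, Some (-1)}"
proof
  assume "(f1 ^^ j) v \<in> {None, Some 1, Some (-1)}"
  then have "(f1 ^^ Suc (n - Suc j)) ((f1 ^^ j) v) = Some 1"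
    by (rule f1_postcritical)
  moreover have "(f1 ^^ n) v = (f1 ^^ (Suc (n - Suc j) + j)) v"
    using \<open>j < n\<close> by simp
  then have "(f1 ^^ n) v = (f1 ^^ Suc (n - Suc j)) ((f1 ^^ j) v)"
    by (simp only: funpow_add o_apply)
  ultimately show False using assms(1) by simp
qed

lemma f1_den_nonzero_not_critical:
  assumes "f1 (Some c) \<notin> {None, Some (-1)}"
  shows "f1_den c \<noteq> 0" and "c\<^sup>2 \<noteq> 3/4"
proof -
  show den: "f1_den c \<noteq> 0" using assms by (auto simp: f1_Some split: if_splits)
  show "c\<^sup>2 \<noteq> 3/4"
  proof
    assume "c\<^sup>2 = 3/4"
    then have "f1_plane c = -1" using den by (simp add: f1_plane_def)
    with den assms show False by (simp add: f1_Some)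
  qed
qed

lemma has_field_derivative_f1_plane:
  assumes "f1_den c \<noteq> 0"
  shows "(f1_plane has_field_derivative
           -(27/8) * (c\<^sup>2 - 3/4)\<^sup>2 / (c ^ 3 * (c\<^sup>2 - 9/8) ^ 3)) (at c)"
proof -
  have c0: "c \<noteq> 0" and c1: "c\<^sup>2 - 9/8 \<noteq> 0" using assms by (auto simp: f1_den_def)
  have "(f1_plane has_field_derivative
     (2 * (3 * (c\<^sup>2 - 3/4)^2 * (2*c)) * (c\<^sup>2 * (c\<^sup>2 - 9/8)\<^sup>2)
      - 2 * (c\<^sup>2 - 3/4)^3 * (2*c * (c\<^sup>2 - 9/8)\<^sup>2 + c\<^sup>2 * (2 * (c\<^sup>2 - 9/8) * (2*c))))
     / (c\<^sup>2 * (c\<^sup>2 - 9/8)\<^sup>2)\<^sup>2) (at c)"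
    unfolding f1_plane_def[abs_def] f1_den_def
    by (rule derivative_eq_intros refl | use c0 c1 in \<open>simp; fail\<close>)+ (simp add: field_simps)
  moreover have "(2 * (3 * (c\<^sup>2 - 3/4)^2 * (2*c)) * (c\<^sup>2 * (c\<^sup>2 - 9/8)\<^sup>2)
      - 2 * (c\<^sup>2 - 3/4)^3 * (2*c * (c\<^sup>2 - 9/8)\<^sup>2 + c\<^sup>2 * (2 * (c\<^sup>2 - 9/8) * (2*c))))
     / (c\<^sup>2 * (c\<^sup>2 - 9/8)\<^sup>2)\<^sup>2 = -(27/8) * (c\<^sup>2 - 3/4)\<^sup>2 / (c ^ 3 * (c\<^sup>2 - 9/8) ^ 3)"
    using c0 c1 by (simp add: field_simps) algebra
  ultimately show ?thesis by simp
qed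

lemma open_f1_den_nonzero: "open {y. f1_den y \<noteq> 0}"
  by (rule open_Collect_neq) (auto intro!: continuous_intros simp: f1_den_def[abs_def])

lemma f1_iterate_conformal_step:
  assumes U: "open U" "a \<in> U" "G holomorphic_on U" "deriv G a \<noteq> 0"
    and c: "G a = c" "f1_den c \<noteq> 0" "c\<^sup>2 \<noteq> 3/4"
  obtains U' where "open U'" "a \<in> U'" "U' \<subseteq> U" "U' \<subseteq> G -` {y. f1_den y \<noteq> 0}"
    "(f1_plane \<circ> G) holomorphic_on U'" "deriv (f1_plane \<circ> G) a \<noteq> 0"
proof
  let ?U' = "U \<inter> G -` {y. f1_den y \<noteq> 0}"
  show "open ?U'"
    by (rule continuous_open_preimage[OF holomorphic_on_imp_continuous_on[OF U(3)] U(1)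
          open_f1_den_nonzero])
  show "a \<in> ?U'" "?U' \<subseteq> U" "?U' \<subseteq> G -` {y. f1_den y \<noteq> 0}" using U c by auto
  have plane: "f1_plane holomorphic_on {y. f1_den y \<noteq> 0}"
    unfolding f1_plane_def[abs_def] f1_den_def by (auto intro!: holomorphic_intros)
  show "(f1_plane \<circ> G) holomorphic_on ?U'"
    by (rule holomorphic_on_compose_gen[OF holomorphic_on_subset[OF U(3)] plane]) auto
  have "(G has_field_derivative deriv G a) (at a)"
    using holomorphic_derivI[OF U(3,1,2)] .
  from DERIV_chain[OF has_field_derivative_f1_plane[OF c(2)[folded c(1)]] this]
  have "deriv (f1_plane \<circ> G) a = -(27/8) * (c\<^sup>2 - 3/4)\<^sup>2 / (c ^ 3 * (c\<^sup>2 - 9/8) ^ 3) * deriv G a"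
    using c(1) by (auto dest: DERIV_imp_deriv)
  then show "deriv (f1_plane \<circ> G) a \<noteq> 0"
    using c U(4) by (simp add: f1_den_def)
qed

lemma f1_iterate_conformal:
  assumes "\<forall>j\<le>k. (f1 ^^ j) (Some a) \<notin> {None, Some (-1)}"
  obtains G U where "open U" "a \<in> U" "G holomorphic_on U" "deriv G a \<noteq> 0"
    "\<forall>z\<in>U. (f1 ^^ k) (Some z) = Some (G z)"
  using assms
proof (induction k arbitrary: thesis)
  case 0
  show ?case by (rule "0.prems"(1)[of UNIV "\<lambda>z. z"]) auto
next
  case (Suc k)
  obtain G U where U: "open U" "a \<in> U" "G holomorphic_on U" "deriv G a \<noteq> 0"
    and eq: "\<forall>z\<in>U. (f1 ^^ k) (Some z) = Some (G z)"
    using Suc.IH Suc.prems(2) by (metis le_SucI)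
  have "f1 (Some (G a)) \<notin> {None, Some (-1)}"
    using Suc.prems(2) eq U(2) by (metis funpow.simps(2) le_refl o_apply)
  note c = f1_den_nonzero_not_critical[OF this]
  obtain U' where U': "open U'" "a \<in> U'" "U' \<subseteq> U" "U' \<subseteq> G -` {y. f1_den y \<noteq> 0}"
    "(f1_plane \<circ> G) holomorphic_on U'" "deriv (f1_plane \<circ> G) a \<noteq> 0"
    using f1_iterate_conformal_step[OF U refl c] .
  have "\<forall>z\<in>U'. (f1 ^^ Suc k) (Some z) = Some ((f1_plane \<circ> G) z)"
    using eq U'(3,4) by (fastforce simp: f1_Some)
  then show ?case using Suc.prems(1) U' by blast
qed

lemma zorder_compose_power:
  fixes G \<psi> :: "complex \<Rightarrow> complex"
  assumes U: "open U" "a \<in> U" "G holomorphic_on U" "deriv G a \<noteq> 0"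
    and V: "open V" "G a \<in> V" "\<psi> holomorphic_on V" "\<psi> (G a) \<noteq> 0"
    and h: "\<forall>z\<in>U. h z = (G z - G a) ^ k * \<psi> (G z)"
  shows "zorder h a = int k"
proof -
  define K where "K z = (if z = a then deriv G a else (G z - G a) / (z - a))" for z
  have K: "K holomorphic_on U"
    unfolding K_def[abs_def] using pole_lemma_open[OF U(3,1)] .
  let ?S = "U \<inter> G -` V"
  have S: "open ?S" "a \<in> ?S"
    using continuous_open_preimage[OF holomorphic_on_imp_continuous_on[OF U(3)] U(1) V(1)] U V
    by auto
  have "(\<psi> \<circ> G) holomorphic_on ?S"
    by (rule holomorphic_on_compose_gen[OF holomorphic_on_subset[OF U(3)] V(3)]) auto
  then have "(\<lambda>z. K z ^ k * \<psi> (G z)) holomorphic_on ?S"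
    by (auto intro!: holomorphic_intros holomorphic_on_subset[OF K] simp: o_def)
  moreover have "h z = K z ^ k * \<psi> (G z) * (z - a) powi int k" if "z \<in> ?S" "z \<noteq> a" for z
    using h that by (simp add: K_def power_divide)
  ultimately show ?thesis
    using zorder_eqI[OF S] U(4) V(4) by (simp add: K_def)
qed

lemma f1_den_double_root:
  assumes "f1_den p = 0"
  obtains E where "E holomorphic_on UNIV" "E p \<noteq> 0" "\<And>y. f1_den y = (y - p)\<^sup>2 * E y"
proof (cases "p = 0")
  case True
  show ?thesis
    by (rule that[of "\<lambda>y. (y\<^sup>2 - 9/8)\<^sup>2"]) (auto intro!: holomorphic_intros simp: True f1_den_def)
next
  case False
  then have p2: "p\<^sup>2 = 9/8" using assms by (simp add: f1_den_def)
  have "f1_den y = (y - p)\<^sup>2 * (y\<^sup>2 * (y + p)\<^sup>2)" for y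
  proof -
    have "f1_den y = y\<^sup>2 * (y\<^sup>2 - p\<^sup>2)\<^sup>2" by (simp add: f1_den_def p2)
    also have "\<dots> = (y - p)\<^sup>2 * (y\<^sup>2 * (y + p)\<^sup>2)" by algebra
    finally show ?thesis .
  qed
  then show ?thesis
    by (rule that[rotated 2]) (auto intro!: holomorphic_intros simp: False)
qed

lemma f1_num_nonzero_at_pole:
  assumes "f1_den p = 0"
  shows "f1_num p \<noteq> 0"
proof -
  have "p\<^sup>2 = 0 \<or> p\<^sup>2 = 9/8" using assms by (simp add: f1_den_def)
  then have "(p\<^sup>2 - 3/4) ^ 3 \<noteq> 0"
  proof
    assume "p\<^sup>2 = 9/8"
    then show ?thesis by (subst \<open>p\<^sup>2 = 9/8\<close>) simp
  qed simp
  then show ?thesis by (simp add: f1_num_def assms)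
qed

text \<open>This holds also where f1_den y = 0, thanks to the conventions chart None None = 0
  and x / 0 = 0.\<close>

lemma chart_infinity_f1: "chart None (f1 (Some y)) = f1_den y / f1_num y"
  by (cases "f1_den y = 0")
     (simp_all add: f1_Some chart_def f1_plane_def f1_num_def field_simps)

theorem lemma5p1:
  fixes n :: nat and v :: sphere
  assumes "n \<ge> 1" and "(f1 ^^ n) v = None"
  shows "local_deg (f1 ^^ n) v = 2"
proof -
  obtain m where n: "n = Suc m" using assms(1) by (cases n) auto
  note avoid = f1_funpow_None_avoids_postcritical[OF assms(2)]
  obtain a where v: "v = Some a" using avoid[of 0] n by auto
  obtain p where p: "(f1 ^^ m) (Some a) = Some p" using avoid[of m] n v by auto
  have pole: "f1_den p = 0" using assms(2) n v p by (simp add: f1_Some split: if_splits)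
  obtain G U where U: "open U" "a \<in> U" "G holomorphic_on U" "deriv G a \<noteq> 0"
    and G: "\<forall>z\<in>U. (f1 ^^ m) (Some z) = Some (G z)"
    using f1_iterate_conformal[of m a] avoid n v by (metis insert_iff le_imp_less_Suc)
  have Ga: "G a = p" using G U(2) p by simp
  obtain E where E: "E holomorphic_on UNIV" "E p \<noteq> 0" "\<And>y. f1_den y = (y - p)\<^sup>2 * E y"
    using f1_den_double_root[OF pole] by blast
  define h where "h z = chart None ((f1 ^^ n) (Some z))" for z
  have "zorder h a = int 2"
  proof (rule zorder_compose_power[OF U, where V = "{y. f1_num y \<noteq> 0}" and \<psi> = "\<lambda>y. E y / f1_num y"])
    show "open {y. f1_num y \<noteq> 0}"
      by (rule open_Collect_neq) (auto intro!: continuous_intros simp: f1_num_def f1_den_def[abs_def])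
    show "(\<lambda>y. E y / f1_num y) holomorphic_on {y. f1_num y \<noteq> 0}"
      by (auto intro!: holomorphic_intros holomorphic_on_subset[OF E(1)] simp: f1_num_def f1_den_def)
    show "\<forall>z\<in>U. h z = (G z - G a) ^ 2 * (E (G z) / f1_num (G z))"
      using G by (simp add: h_def n Ga chart_infinity_f1 E(3))
  qed (use Ga E(2) f1_num_nonzero_at_pole[OF pole] in auto)
  then show ?thesis
    unfolding local_deg_def zorder_shift[of h a] using assms(2) v
    by (simp add: h_def chart_inv_def add.commute)
qed

end
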